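(* Let $n$ be a natural number and let $(A,+,\circ)$ be a left brace of cardinality $p^{n}$, where $p$ is a prime with $p>n+1$. Then $pA=\{pa: a\in A\}$ is a brace (a sub-brace of $A$), and every product of any $p-1$ elements of $pA$ under the operation $*$ (with any distribution of brackets) is zero; hence $pA$ is a strongly nilpotent brace of nilpotency index at most $p-1$. Moreover, every $*$-product (with any distribution of brackets) of $i$ elements of $pA$ together with any number of elements of $A$ lies in $p^{i}A$; hence every such product containing $p-1$ elements from $pA$ (and any number of elements from $A$) is zero. Finally, $p^{p-1}A=0$.
   Context: A (left) brace is a set $A$ with operations $+,\circ$ such that $(A,+)$ is an abelian group, $(A,\circ)$ is a group, and $a\circ(b+c)+a=a\circ b+a\circ c$ for all $a,b,c\in A$. One writes $a*b=a\circ b-a-b$; then $a*(b+c)=a*b+a*c$. For an integer $m$, $mA=\{ma:a\in A\}$. A brace $B$ is strongly nilpotent if there is $k$ with $B^{[k]}=0$, where $B^{[1]}=B$ and $B^{[i]}$ is the additive span of all $a*b$ with $a\in B^{[j]}$, $b\in B^{[i-j]}$, $0<j<i$; the least such $k$ is the nilpotency index. *)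

theory Defs
  imports "HOL-Computational_Algebra.Primes"
begin

definition left_brace :: "('a::ab_group_add \<Rightarrow> 'a \<Rightarrow> 'a) \<Rightarrow> bool" where
  "left_brace circ \<longleftrightarrow>
     (\<forall>a b c. circ (circ a b) c = circ a (circ b c)) \<and>
     (\<exists>e. (\<forall>a. circ e a = a \<and> circ a e = a) \<and> (\<forall>a. \<exists>b. circ a b = e \<and> circ b a = e)) \<and>
     (\<forall>a b c. circ a (b + c) + a = circ a b + circ a c)"

definition star :: "('a::ab_group_add \<Rightarrow> 'a \<Rightarrow> 'a) \<Rightarrow> 'a \<Rightarrow> 'a \<Rightarrow> 'a" where
  "star circ a b = circ a b - a - b"

primrec nsmul :: "nat \<Rightarrow> 'a::monoid_add \<Rightarrow> 'a" where
  "nsmul 0 a = 0"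
| "nsmul (Suc n) a = a + nsmul n a"

definition mult_set :: "nat \<Rightarrow> 'a::monoid_add set" where
  "mult_set m = {nsmul m a | a. True}"

definition sub_brace :: "('a::ab_group_add \<Rightarrow> 'a \<Rightarrow> 'a) \<Rightarrow> 'a set \<Rightarrow> bool" where
  "sub_brace circ B \<longleftrightarrow>
     0 \<in> B \<and> (\<forall>a\<in>B. \<forall>b\<in>B. a + b \<in> B) \<and> (\<forall>a\<in>B. - a \<in> B) \<and>
     (\<forall>a\<in>B. \<forall>b\<in>B. circ a b \<in> B) \<and>
     (\<forall>a\<in>B. \<exists>b\<in>B. \<forall>x. circ (circ a b) x = x \<and> circ x (circ a b) = x)"

text \<open>Bracketed products: binary trees with leaves in A, evaluated with star.\<close>
datatype 'a btree = Leaf 'a | Node "'a btree" "'a btree"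

primrec leaves :: "'a btree \<Rightarrow> 'a list" where
  "leaves (Leaf a) = [a]"
| "leaves (Node l r) = leaves l @ leaves r"

primrec tree_eval :: "('a::ab_group_add \<Rightarrow> 'a \<Rightarrow> 'a) \<Rightarrow> 'a btree \<Rightarrow> 'a" where
  "tree_eval circ (Leaf a) = a"
| "tree_eval circ (Node l r) = star circ (tree_eval circ l) (tree_eval circ r)"

text \<open>spow circ B i = B^[i]: B^[1] = B and B^[i] is the additive span of the
a * b with a in B^[j], b in B^[i-j], 0 < j < i (spow circ B 0 = {0} is junk).\<close>
inductive in_spow :: "('a::ab_group_add \<Rightarrow> 'a \<Rightarrow> 'a) \<Rightarrow> 'a set \<Rightarrow> nat \<Rightarrow> 'a \<Rightarrow> bool"
  for circ B where
  base: "b \<in> B \<Longrightarrow> in_spow circ B 1 b"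
| prod: "in_spow circ B j a \<Longrightarrow> in_spow circ B k b \<Longrightarrow> 0 < j \<Longrightarrow> 0 < k
         \<Longrightarrow> in_spow circ B (j + k) (star circ a b)"
| zero: "in_spow circ B i 0"
| add: "in_spow circ B i x \<Longrightarrow> in_spow circ B i y \<Longrightarrow> in_spow circ B i (x + y)"
| neg: "in_spow circ B i x \<Longrightarrow> in_spow circ B i (- x)"

definition spow :: "('a::ab_group_add \<Rightarrow> 'a \<Rightarrow> 'a) \<Rightarrow> 'a set \<Rightarrow> nat \<Rightarrow> 'a set" where
  "spow circ B i = {x. in_spow circ B i x}"

definition strongly_nilpotent_index_le :: "('a::ab_group_add \<Rightarrow> 'a \<Rightarrow> 'a) \<Rightarrow> 'a set \<Rightarrow> nat \<Rightarrow> bool" where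
  "strongly_nilpotent_index_le circ B m \<longleftrightarrow> (\<exists>k. 1 \<le> k \<and> k \<le> m \<and> spow circ B k = {0})"

end

theory Submission
  imports Defs "HOL.Modules" "HOL-Algebra.Group_Action" "HOL-Algebra.Multiplicative_Group"
begin

text \<open>
  Write \<open>\<lambda>\<^sub>a x = a \<circ> x - a\<close>, so that \<open>a * x = \<lambda>\<^sub>a x - x\<close>; every \<open>\<lambda>\<^sub>a\<close> is additive and
  \<open>a \<mapsto> \<lambda>\<^sub>a\<close> turns \<open>\<circ>\<close> into composition. The \<open>p\<close>-group \<open>(A, \<circ>)\<close> acts through \<open>\<lambda>\<close> on
  the cosets of a left ideal \<open>W \<subset> V\<close> and therefore fixes a coset other than \<open>W\<close>. This
  gives a chain of left ideals \<open>A = V\<^sub>0 \<supset> V\<^sub>1 \<supset> \<dots> \<supset> 0\<close> of length at most \<open>n\<close> with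
  \<open>A * V\<^sub>k \<subseteq> V\<^sub>k\<^sub>+\<^sub>1\<close>, so that \<open>n\<close>-fold products \<open>c * (c * \<dots> (c * x))\<close> vanish.

  For \<open>c \<in> V\<^sub>k\<close> let \<open>g\<close> be the \<open>p^i\<close>-th \<open>\<circ>\<close>-power of \<open>c\<close>. Expanding
  \<open>\<lambda>\<^sub>g = (id + c * _)^(p^i)\<close> binomially, the coefficients \<open>p^i choose k\<close> with \<open>0 < k < p\<close>
  are divisible by \<open>p^i\<close> and all other terms vanish because \<open>n < p\<close>; so \<open>\<lambda>\<^sub>g\<close> is the
  identity modulo \<open>p^i A\<close>, and in the same way \<open>g = p^i c + p^i y\<close> with \<open>y \<in> V\<^sub>k\<^sub>+\<^sub>1\<close>.
  Hence \<open>p^i c = g \<circ> p^i y'\<close> with \<open>y' \<in> V\<^sub>k\<^sub>+\<^sub>1\<close>, and induction down the chain gives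
  \<open>p^i c * x \<in> p^i A\<close>. Thus \<open>p^j A * p^k A \<subseteq> p^(j+k) A\<close>, and everything follows from
  \<open>p^(p-1) A = 0\<close>, which holds because \<open>p^n\<close> annihilates \<open>A\<close> and \<open>n \<le> p - 1\<close>.
\<close>

section \<open>Multiples and additive subgroups\<close>

lemma nsmul_left_distrib: "nsmul (m + k) a = nsmul m a + nsmul k (a::'a::ab_group_add)"
  by (induction m) (simp_all add: add.assoc)

lemma additive_nsmul: "additive (nsmul m :: 'a::ab_group_add \<Rightarrow> 'a)"
  by unfold_locales (induction m, simp_all add: algebra_simps)

lemma nsmul_nsmul: "nsmul m (nsmul k a) = nsmul (m * k) (a::'a::ab_group_add)"
  by (induction m) (simp_all add: nsmul_left_distrib)

lemma nsmul_0_right [simp]: "nsmul m (0::'a::ab_group_add) = 0"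
  by (rule additive.zero[OF additive_nsmul])

lemma (in additive) map_nsmul: "f (nsmul m x) = nsmul m (f x)"
  by (induction m) (simp_all add: add zero)

definition add_subgroup :: "'a::ab_group_add set \<Rightarrow> bool" where
  "add_subgroup V \<longleftrightarrow> 0 \<in> V \<and> (\<forall>x\<in>V. \<forall>y\<in>V. x + y \<in> V) \<and> (\<forall>x\<in>V. - x \<in> V)"

lemma add_subgroup_zero: "add_subgroup V \<Longrightarrow> 0 \<in> V"
  and add_subgroup_add: "add_subgroup V \<Longrightarrow> x \<in> V \<Longrightarrow> y \<in> V \<Longrightarrow> x + y \<in> V"
  and add_subgroup_uminus: "add_subgroup V \<Longrightarrow> x \<in> V \<Longrightarrow> - x \<in> V"
  by (simp_all add: add_subgroup_def)

lemma add_subgroup_diff: "add_subgroup V \<Longrightarrow> x \<in> V \<Longrightarrow> y \<in> V \<Longrightarrow> x - y \<in> V"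
  using add_subgroup_add add_subgroup_uminus by (metis diff_conv_add_uminus)

lemma add_subgroup_sum: "add_subgroup V \<Longrightarrow> (\<And>i. i \<in> S \<Longrightarrow> f i \<in> V) \<Longrightarrow> sum f S \<in> V"
  by (induction S rule: infinite_finite_induct) (simp_all add: add_subgroup_def)

lemma add_subgroup_nsmul: "add_subgroup V \<Longrightarrow> x \<in> V \<Longrightarrow> nsmul m x \<in> V"
  by (induction m) (simp_all add: add_subgroup_def)

lemma add_subgroup_mult_set: "add_subgroup (mult_set m :: 'a::ab_group_add set)"
proof -
  interpret additive "nsmul m :: 'a \<Rightarrow> 'a" by (rule additive_nsmul)
  show ?thesis
    unfolding add_subgroup_def mult_set_def
    by (auto simp flip: add minus intro: exI[of _ 0] simp: zero)
qed

lemma nsmul_in_mult_set [simp]: "nsmul m a \<in> mult_set m"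
  unfolding mult_set_def by blast

lemma mult_set_1 [simp]: "mult_set 1 = (UNIV :: 'a::ab_group_add set)"
  unfolding mult_set_def by force

lemma mult_set_antimono: "m dvd k \<Longrightarrow> (mult_set k :: 'a::ab_group_add set) \<subseteq> mult_set m"
  unfolding mult_set_def dvd_def by (auto simp: nsmul_nsmul[symmetric])

lemma add_coset_eq_self_iff:
  "add_subgroup W \<Longrightarrow> (\<lambda>w. w + v) ` W = W \<longleftrightarrow> v \<in> W"
proof
  assume "add_subgroup W" "(\<lambda>w. w + v) ` W = W"
  then show "v \<in> W"
    using add_subgroup_zero by (metis add_0 imageI)
next
  assume "add_subgroup W" "v \<in> W"
  then have "w \<in> (\<lambda>w. w + v) ` W" if "w \<in> W" for w
    using that add_subgroup_diff by (intro rev_image_eqI[of "w - v"]) simp_all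
  then show "(\<lambda>w. w + v) ` W = W"
    using \<open>add_subgroup W\<close> \<open>v \<in> W\<close> add_subgroup_add by auto
qed

definition add_group :: "'a::ab_group_add monoid" where
  "add_group = \<lparr>carrier = UNIV, mult = (+), one = 0\<rparr>"

lemma group_add_group: "group add_group"
  by (rule groupI) (auto simp: add_group_def add.assoc intro: add.left_inverse)

lemma inv_add_group: "inv\<^bsub>add_group\<^esub> x = - x"
  using group.inv_equality[OF group_add_group, of "- x" x] by (simp add: add_group_def)

lemma nat_pow_add_group: "x [^]\<^bsub>add_group\<^esub> (m::nat) = nsmul m x"
  by (induction m) (simp_all add: add_group_def add.commute)

lemma subgroup_add_group: "add_subgroup V \<Longrightarrow> subgroup V add_group"
  unfolding subgroup_def add_subgroup_def by (auto simp: inv_add_group) (auto simp: add_group_def)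

lemma order_add_group: "order (add_group :: 'a::ab_group_add monoid) = card (UNIV :: 'a set)"
  by (simp add: order_def add_group_def)

lemma card_add_subgroup_dvd:
  fixes V :: "'a::ab_group_add set"
  assumes "add_subgroup V"
  shows "card V dvd card (UNIV :: 'a set)"
  using group.lagrange[OF group_add_group subgroup_add_group[OF assms]]
  unfolding order_add_group by (metis dvd_triv_right)

lemma nsmul_card_UNIV: "nsmul (card (UNIV :: 'a set)) x = (0::'a::ab_group_add)"
  using group.pow_order_eq_1[OF group_add_group, of x]
  unfolding nat_pow_add_group order_add_group by (simp add: add_group_def)

definition add_cosets :: "'a::ab_group_add set \<Rightarrow> 'a set \<Rightarrow> 'a set set" where
  "add_cosets V W = (\<lambda>x. (\<lambda>w. w + x) ` W) ` V"

lemma card_add_cosets: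
  assumes "add_subgroup V" "add_subgroup W" "W \<subseteq> V"
  shows "card (add_cosets V W) * card W = card (V::'a::ab_group_add set)"
proof -
  let ?H = "add_group\<lparr>carrier := V\<rparr> :: 'a monoid"
  have "subgroup W ?H"
    using group.subgroup_incl[OF group_add_group] subgroup_add_group assms by blast
  moreover have "group ?H"
    using group.subgroup_imp_group[OF group_add_group subgroup_add_group[OF assms(1)]] .
  ultimately have "card (rcosets\<^bsub>?H\<^esub> W) * card W = card V"
    using group.lagrange by (fastforce simp: order_def)
  moreover have "rcosets\<^bsub>?H\<^esub> W = add_cosets V W"
    unfolding RCOSETS_def r_coset_def add_cosets_def by (auto simp: add_group_def)
  ultimately show ?thesis by simp
qed

section \<open>Binomial expansions\<close>

lemma pascal_nsmul_sum:
  fixes g :: "nat \<Rightarrow> 'a::ab_group_add"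
  shows "(\<Sum>m\<le>Suc k. nsmul (Suc k choose m) (g m)) =
         (\<Sum>m\<le>k. nsmul (k choose m) (g m)) + (\<Sum>m\<le>k. nsmul (k choose m) (g (Suc m)))"
proof -
  have "(\<Sum>m\<le>Suc k. nsmul (Suc k choose m) (g m))
      = g 0 + (\<Sum>m\<le>k. nsmul (k choose Suc m) (g (Suc m))) + (\<Sum>m\<le>k. nsmul (k choose m) (g (Suc m)))"
    unfolding sum.atMost_Suc_shift by (simp add: nsmul_left_distrib sum.distrib algebra_simps)
  also have "g 0 + (\<Sum>m\<le>k. nsmul (k choose Suc m) (g (Suc m))) = (\<Sum>m\<le>Suc k. nsmul (k choose m) (g m))"
    unfolding sum.atMost_Suc_shift by simp
  also have "\<dots> = (\<Sum>m\<le>k. nsmul (k choose m) (g m))"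
    by (simp add: binomial_eq_0)
  finally show ?thesis .
qed

lemma iterate_id_plus_binomial:
  fixes f :: "'a::ab_group_add \<Rightarrow> 'a"
  assumes "additive f"
  shows "((\<lambda>y. y + f y) ^^ k) x = (\<Sum>m\<le>k. nsmul (k choose m) ((f ^^ m) x))"
proof (induction k)
  case (Suc k)
  interpret additive f by fact
  have "((\<lambda>y. y + f y) ^^ Suc k) x
      = (\<Sum>m\<le>k. nsmul (k choose m) ((f ^^ m) x)) + (\<Sum>m\<le>k. nsmul (k choose m) ((f ^^ Suc m) x))"
    by (simp add: Suc sum map_nsmul)
  then show ?case by (simp only: pascal_nsmul_sum)
qed simp

lemma prime_power_dvd_choose:
  assumes "prime p" "0 < m" "m < p"
  shows "p ^ i dvd (p ^ i choose m)"
proof -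
  have "m * (p ^ i choose m) = p ^ i * ((p ^ i - 1) choose (m - 1))"
    using times_binomial_minus1_eq[OF \<open>0 < m\<close>] by simp
  moreover have "coprime (p ^ i) m"
    using assms by (simp add: prime_imp_coprime nat_dvd_not_less)
  ultimately show ?thesis
    by (metis coprime_dvd_mult_right_iff dvd_triv_left)
qed

section \<open>Fixed points of \<open>p\<close>-group actions\<close>

lemma group_actionI:
  assumes G: "group G"
    and closed: "\<And>g x. g \<in> carrier G \<Longrightarrow> x \<in> E \<Longrightarrow> act g x \<in> E"
    and one: "\<And>x. x \<in> E \<Longrightarrow> act \<one>\<^bsub>G\<^esub> x = x"
    and mult: "\<And>g h x. g \<in> carrier G \<Longrightarrow> h \<in> carrier G \<Longrightarrow> x \<in> E \<Longrightarrow>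
                 act (g \<otimes>\<^bsub>G\<^esub> h) x = act g (act h x)"
  shows "group_action G E (\<lambda>g. restrict (act g) E)"
proof -
  interpret group G by (rule G)
  have bij: "restrict (act g) E \<in> Bij E" if "g \<in> carrier G" for g
  proof -
    have "bij_betw (act g) E E"
    proof (rule bij_betwI[where g = "act (inv\<^bsub>G\<^esub> g)"])
      show "act (inv\<^bsub>G\<^esub> g) (act g x) = x" if "x \<in> E" for x
        using mult[of "inv\<^bsub>G\<^esub> g" g x] one \<open>g \<in> carrier G\<close> that by simp
      show "act g (act (inv\<^bsub>G\<^esub> g) y) = y" if "y \<in> E" for y
        using mult[of g "inv\<^bsub>G\<^esub> g" y] one \<open>g \<in> carrier G\<close> that by simp
    qed (use closed \<open>g \<in> carrier G\<close> in auto)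
    then show ?thesis
      unfolding Bij_def by simp
  qed
  have "(\<lambda>g. restrict (act g) E) \<in> hom G (BijGroup E)"
  proof (rule homI)
    show "restrict (act g) E \<in> carrier (BijGroup E)" if "g \<in> carrier G" for g
      using bij[OF that] by (simp add: BijGroup_def)
    show "restrict (act (g \<otimes>\<^bsub>G\<^esub> h)) E = restrict (act g) E \<otimes>\<^bsub>BijGroup E\<^esub> restrict (act h) E"
      if "g \<in> carrier G" "h \<in> carrier G" for g h
      using bij that by (auto simp: BijGroup_def compose_def mult closed)
  qed
  then show ?thesis
    unfolding group_action_def group_hom_def group_hom_axioms_def
    by (simp add: group_BijGroup)
qed

lemma (in group_action) card_orbit_eq_1_or_prime_dvd:
  assumes "x \<in> E" "prime p" "order G = p ^ k"
  shows "card (orbit G \<phi> x) = 1 \<or> p dvd card (orbit G \<phi> x)"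
proof -
  have "card (orbit G \<phi> x) dvd p ^ k"
    using orbit_stabilizer_theorem[OF \<open>x \<in> E\<close>] \<open>order G = p ^ k\<close> by (metis dvd_triv_left)
  then obtain j where "card (orbit G \<phi> x) = p ^ j"
    using \<open>prime p\<close> by (auto simp: divides_primepow_nat)
  then show ?thesis
    by (cases j) simp_all
qed

lemma (in group_action) card_fixed_points_mod:
  assumes "finite E" "prime p" "order G = p ^ k"
  shows "card {x \<in> E. \<forall>g \<in> carrier G. \<phi> g x = x} mod p = card E mod p"
proof -
  define F where "F = {x \<in> E. \<forall>g \<in> carrier G. \<phi> g x = x}"
  define Q1 where "Q1 = {Q \<in> orbits G E \<phi>. card Q = 1}"
  have fin_orbits: "finite (orbits G E \<phi>)"
    using \<open>finite E\<close> unfolding orbits_def by simp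
  have singleton_orbit: "orbit G \<phi> x = {x} \<longleftrightarrow> x \<in> F" if "x \<in> E" for x
    using orbit_refl[OF that] that unfolding F_def orbit_def by blast
  have "Q1 = (\<lambda>x. {x}) ` F"
  proof
    show "Q1 \<subseteq> (\<lambda>x. {x}) ` F"
    proof
      fix Q assume "Q \<in> Q1"
      then obtain x where "x \<in> E" "Q = orbit G \<phi> x" "card Q = 1"
        unfolding Q1_def orbits_def by blast
      then have "Q = {x}"
        using orbit_refl[OF \<open>x \<in> E\<close>] by (metis card_1_singletonE singletonD)
      then show "Q \<in> (\<lambda>x. {x}) ` F"
        using singleton_orbit \<open>x \<in> E\<close> \<open>Q = orbit G \<phi> x\<close> by blast
    qed
    show "(\<lambda>x. {x}) ` F \<subseteq> Q1"
      using singleton_orbit unfolding Q1_def orbits_def F_def by fastforce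
  qed
  then have "card F = card Q1"
    by (simp add: card_image)
  have "card E = (\<Sum>Q \<in> orbits G E \<phi>. card Q)"
    using disjoint_sum[OF \<open>finite E\<close>, of "\<lambda>_. 1::nat"] by simp
  also have "\<dots> = card Q1 + (\<Sum>Q \<in> orbits G E \<phi> - Q1. card Q)"
    using sum.subset_diff[of Q1 "orbits G E \<phi>" card] fin_orbits
    by (simp add: Q1_def)
  finally have "card E = card F + (\<Sum>Q \<in> orbits G E \<phi> - Q1. card Q)"
    using \<open>card F = card Q1\<close> by simp
  moreover have "p dvd (\<Sum>Q \<in> orbits G E \<phi> - Q1. card Q)"
    using card_orbit_eq_1_or_prime_dvd assms by (intro dvd_sum) (auto simp: Q1_def orbits_def)
  ultimately show ?thesis
    unfolding F_def dvd_def by auto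
qed

section \<open>Braces and left ideals\<close>

locale brace =
  fixes circ :: "'a::ab_group_add \<Rightarrow> 'a \<Rightarrow> 'a"
  assumes left_brace: "left_brace circ"
begin

lemma circ_assoc: "circ (circ a b) c = circ a (circ b c)"
  using left_brace unfolding left_brace_def by blast

lemma circ_add_distrib: "circ a (b + c) + a = circ a b + circ a c"
  using left_brace unfolding left_brace_def by blast

lemma circ_0_right [simp]: "circ a 0 = a"
  using circ_add_distrib[of a 0 0] by simp

lemma circ_neutral_eq_0: "\<forall>a. circ e a = a \<and> circ a e = a \<Longrightarrow> e = 0"
  by (metis circ_0_right)

lemma circ_0_left [simp]: "circ 0 a = a"
  using left_brace circ_neutral_eq_0 unfolding left_brace_def by blast

lemma ex_circ_inverse: "\<exists>b. circ b a = 0"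
  using left_brace circ_neutral_eq_0 unfolding left_brace_def by metis

definition circ_group :: "'a monoid" where
  "circ_group = \<lparr>carrier = UNIV, mult = circ, one = 0\<rparr>"

lemma group_circ_group: "group circ_group"
  by (rule groupI) (simp_all add: circ_group_def circ_assoc ex_circ_inverse)

lemma one_circ_group [simp]: "\<one>\<^bsub>circ_group\<^esub> = 0"
  by (simp add: circ_group_def)

abbreviation circ_inv :: "'a \<Rightarrow> 'a" where
  "circ_inv a \<equiv> inv\<^bsub>circ_group\<^esub> a"

lemma circ_inv_right [simp]: "circ a (circ_inv a) = 0"
  using group.r_inv[OF group_circ_group] by (simp add: circ_group_def)

definition lam :: "'a \<Rightarrow> 'a \<Rightarrow> 'a" where
  "lam a x = circ a x - a"

lemma circ_eq_add_lam: "circ a x = a + lam a x"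
  by (simp add: lam_def)

lemma additive_lam: "additive (lam a)"
proof
  fix x y
  have "circ a (x + y) = circ a x + circ a y - a"
    using circ_add_distrib by (simp add: eq_diff_eq)
  then show "lam a (x + y) = lam a x + lam a y"
    by (simp add: lam_def)
qed

lemma lam_circ: "lam (circ a b) x = lam a (lam b x)"
proof -
  interpret additive "lam a" by (rule additive_lam)
  have "lam (circ a b) x = circ a (circ b x) - circ a b"
    by (simp add: lam_def circ_assoc)
  also have "\<dots> = lam a (lam b x)"
    by (simp add: circ_eq_add_lam add)
  finally show ?thesis .
qed

lemma lam_0 [simp]: "lam 0 x = x"
  by (simp add: lam_def)

lemma lam_circ_inv [simp]: "lam a (lam (circ_inv a) x) = x"
  by (simp flip: lam_circ)

lemma star_eq_lam: "star circ a x = lam a x - x"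
  by (simp add: star_def lam_def)

lemma additive_star: "additive (star circ a)"
  using additive_lam[of a] by unfold_locales (simp add: star_eq_lam additive.add algebra_simps)

lemma star_0_left [simp]: "star circ 0 x = 0"
  by (simp add: star_eq_lam)

lemma lam_eq_id_plus_star: "lam a = (\<lambda>x. x + star circ a x)"
  by (simp add: star_eq_lam)

lemma circ_pow_Suc: "c [^]\<^bsub>circ_group\<^esub> Suc k = circ c (c [^]\<^bsub>circ_group\<^esub> k)"
  using monoid.nat_pow_Suc2[OF group.is_monoid[OF group_circ_group]] by (simp add: circ_group_def)

lemma lam_circ_pow: "lam (c [^]\<^bsub>circ_group\<^esub> k) x = (lam c ^^ k) x"
  by (induction k arbitrary: x) (simp_all add: circ_pow_Suc lam_circ del: nat_pow_Suc)

lemma circ_pow_binomial: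
  "c [^]\<^bsub>circ_group\<^esub> k = (\<Sum>m<k. nsmul (k choose Suc m) ((star circ c ^^ m) c))"
proof (induction k)
  case (Suc k)
  interpret additive "star circ c" by (rule additive_star)
  have "c [^]\<^bsub>circ_group\<^esub> Suc k = (c + star circ c (c [^]\<^bsub>circ_group\<^esub> k)) + c [^]\<^bsub>circ_group\<^esub> k"
    by (simp add: circ_pow_Suc circ_eq_add_lam star_eq_lam del: nat_pow_Suc)
  moreover have "c + star circ c (c [^]\<^bsub>circ_group\<^esub> k) = (\<Sum>m<Suc k. nsmul (k choose m) ((star circ c ^^ m) c))"
    unfolding sum.lessThan_Suc_shift Suc by (simp add: sum map_nsmul)
  moreover have "c [^]\<^bsub>circ_group\<^esub> k = (\<Sum>m<Suc k. nsmul (k choose Suc m) ((star circ c ^^ m) c))"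
    by (simp add: Suc binomial_eq_0 del: nat_pow_Suc)
  ultimately show ?case
    by (simp add: nsmul_left_distrib sum.distrib del: nat_pow_Suc)
qed simp

definition left_ideal :: "'a set \<Rightarrow> bool" where
  "left_ideal V \<longleftrightarrow> add_subgroup V \<and> (\<forall>a. \<forall>x\<in>V. lam a x \<in> V)"

lemma left_ideal_UNIV: "left_ideal UNIV"
  by (simp add: left_ideal_def add_subgroup_def)

lemma left_ideal_zero: "left_ideal {0}"
  by (simp add: left_ideal_def add_subgroup_def additive.zero[OF additive_lam])

lemma left_ideal_star: "left_ideal V \<Longrightarrow> x \<in> V \<Longrightarrow> star circ a x \<in> V"
  unfolding left_ideal_def star_eq_lam by (blast intro: add_subgroup_diff)

lemma funpow_star_zero: "(star circ a ^^ m) 0 = 0"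
  by (induction m) (simp_all add: additive.zero[OF additive_star])

lemma left_ideal_funpow_star: "left_ideal V \<Longrightarrow> x \<in> V \<Longrightarrow> (star circ a ^^ m) x \<in> V"
  by (induction m) (simp_all add: left_ideal_star)

lemma lam_image_left_ideal: "left_ideal V \<Longrightarrow> lam a ` V = V"
  unfolding left_ideal_def by (auto intro: image_eqI[where x = "lam (circ_inv a) _"])

lemma left_ideal_star_preimage:
  assumes V: "left_ideal V" and W: "left_ideal W"
  shows "left_ideal {v \<in> V. \<forall>a. star circ a v \<in> W}"
proof -
  have W_add: "add_subgroup W"
    using W by (simp add: left_ideal_def)
  have "star circ a (lam b x) \<in> W" if "\<forall>a. star circ a x \<in> W" for a b x
  proof -
    have "lam b x = x + star circ b x"
      by (simp add: star_eq_lam)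
    then have "star circ a (lam b x) = star circ a x + star circ a (star circ b x)"
      by (simp only: additive.add[OF additive_star])
    then show ?thesis
      using that by (simp add: add_subgroup_add[OF W_add] left_ideal_star[OF W])
  qed
  moreover have "star circ a 0 \<in> W" for a
    using W_add add_subgroup_zero additive.zero[OF additive_star] by simp
  moreover have "star circ a (x + y) \<in> W" if "star circ a x \<in> W" "star circ a y \<in> W" for a x y
    using that W_add add_subgroup_add additive.add[OF additive_star] by simp
  moreover have "star circ a (- x) \<in> W" if "star circ a x \<in> W" for a x
    using that W_add add_subgroup_uminus additive.minus[OF additive_star] by simp
  ultimately show ?thesis
    using V unfolding left_ideal_def add_subgroup_def by simp
qed

end

section \<open>Braces of prime power order\<close>

locale p_brace = brace circ for circ :: "'a::{ab_group_add,finite} \<Rightarrow> 'a \<Rightarrow> 'a" +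
  fixes p n :: nat
  assumes prime_p: "prime p"
    and card_UNIV: "card (UNIV :: 'a set) = p ^ n"
begin

lemma card_add_subgroup_dvd_prime_power: "add_subgroup V \<Longrightarrow> card (V :: 'a set) dvd p ^ n"
  using card_add_subgroup_dvd[of V] by (simp add: card_UNIV)

lemma prime_dvd_card_add_cosets:
  assumes V: "add_subgroup V" and W: "add_subgroup W" and "W \<subset> (V :: 'a set)"
  shows "p dvd card (add_cosets V W)"
proof -
  obtain v where "v \<in> V" "v \<notin> W"
    using \<open>W \<subset> V\<close> by blast
  then have "(\<lambda>w. w + v) ` W \<in> add_cosets V W" "(\<lambda>w. w + v) ` W \<noteq> W"
    using add_coset_eq_self_iff[OF W] unfolding add_cosets_def by auto
  moreover have "W \<in> add_cosets V W"
    using add_subgroup_zero[OF V] unfolding add_cosets_def by force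
  ultimately have "card (add_cosets V W) \<noteq> 1"
    by (metis card_1_singletonE singletonD)
  have "card (add_cosets V W) dvd card V"
    using card_add_cosets[OF V W] \<open>W \<subset> V\<close> by (metis dvd_triv_left less_imp_le)
  then have "card (add_cosets V W) dvd p ^ n"
    using card_add_subgroup_dvd_prime_power[OF V] by (rule dvd_trans)
  then obtain i where "card (add_cosets V W) = p ^ i"
    using prime_p by (auto simp: divides_primepow_nat)
  then show ?thesis
    using \<open>card (add_cosets V W) \<noteq> 1\<close> by (cases i) simp_all
qed

lemma lam_image_add_coset:
  assumes "left_ideal W"
  shows "lam a ` ((\<lambda>w. w + x) ` W) = (\<lambda>w. w + lam a x) ` W"
proof -
  have "lam a ` ((\<lambda>w. w + x) ` W) = (\<lambda>w. w + lam a x) ` lam a ` W"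
    by (auto simp: image_image additive.add[OF additive_lam])
  then show ?thesis
    using lam_image_left_ideal[OF assms] by simp
qed

lemma group_action_add_cosets:
  assumes "left_ideal V" "left_ideal W"
  shows "group_action circ_group (add_cosets V W) (\<lambda>a. restrict (\<lambda>S. lam a ` S) (add_cosets V W))"
proof (rule group_actionI[OF group_circ_group])
  show "lam a ` S \<in> add_cosets V W" if "S \<in> add_cosets V W" for a S
    using that assms lam_image_add_coset unfolding add_cosets_def left_ideal_def by auto
qed (simp_all add: circ_group_def lam_circ image_image)

lemma exists_fixed_coset:
  assumes V: "left_ideal V" and W: "left_ideal W" and "W \<subset> V"
  shows "\<exists>v\<in>V. v \<notin> W \<and> (\<forall>a. star circ a v \<in> W)"
proof -
  have V_add: "add_subgroup V" and W_add: "add_subgroup W"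
    using V W by (simp_all add: left_ideal_def)
  define F where "F = {S \<in> add_cosets V W. \<forall>a. lam a ` S = S}"
  have "F = {S \<in> add_cosets V W. \<forall>a \<in> carrier circ_group. restrict (\<lambda>S. lam a ` S) (add_cosets V W) S = S}"
    unfolding F_def by (auto simp: circ_group_def)
  then have "card F mod p = card (add_cosets V W) mod p"
    using group_action.card_fixed_points_mod[OF group_action_add_cosets[OF V W] _ prime_p]
    by (simp add: order_def circ_group_def card_UNIV)
  then have "p dvd card F"
    using prime_dvd_card_add_cosets[OF V_add W_add \<open>W \<subset> V\<close>] by (simp add: mod_eq_0_iff_dvd[symmetric])
  then have "F \<noteq> {W}"
    using prime_p by auto
  moreover have "W \<in> add_cosets V W"
    using add_subgroup_zero[OF V_add] unfolding add_cosets_def by force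
  then have "W \<in> F"
    using lam_image_left_ideal[OF W] unfolding F_def by simp
  ultimately obtain S where "S \<in> F" "S \<noteq> W"
    by blast
  then obtain v where "v \<in> V" and S: "S = (\<lambda>w. w + v) ` W"
    unfolding F_def add_cosets_def by blast
  then have "v \<notin> W"
    using \<open>S \<noteq> W\<close> add_coset_eq_self_iff[OF W_add] by blast
  moreover have "star circ a v \<in> W" for a
  proof -
    have "v \<in> S"
      using S add_subgroup_zero[OF W_add] by force
    moreover have "lam a ` S = S"
      using \<open>S \<in> F\<close> unfolding F_def by blast
    ultimately have "lam a v \<in> S"
      by blast
    then show ?thesis
      using S by (auto simp: star_eq_lam)
  qed
  ultimately show ?thesis
    using \<open>v \<in> V\<close> by blast
qed

lemma left_ideal_descent:
  assumes V: "left_ideal V" and "V \<noteq> {0}"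
  obtains W where "left_ideal W" "W \<subset> V" "\<forall>a. \<forall>v\<in>V. star circ a v \<in> W"
proof -
  let ?P = "{W. left_ideal W \<and> W \<subset> V}"
  have "{0} \<in> ?P"
    using V \<open>V \<noteq> {0}\<close> left_ideal_zero by (auto simp: left_ideal_def add_subgroup_zero)
  then have "\<exists>W\<in>?P. \<forall>W'\<in>?P. W \<subseteq> W' \<longrightarrow> W = W'"
    by (intro finite_has_maximal) auto
  then obtain W where "W \<in> ?P" and W_max: "\<forall>W'\<in>?P. W \<subseteq> W' \<longrightarrow> W = W'"
    by (rule bexE)
  then have W: "left_ideal W" "W \<subset> V"
    by simp_all
  define F where "F = {v \<in> V. \<forall>a. star circ a v \<in> W}"
  have "left_ideal F"
    unfolding F_def using left_ideal_star_preimage V W(1) .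
  moreover have "W \<subseteq> F"
    using W left_ideal_star unfolding F_def by blast
  moreover obtain v where "v \<in> V" "v \<notin> W" "\<forall>a. star circ a v \<in> W"
    using exists_fixed_coset V W by blast
  then have "F \<noteq> W"
    unfolding F_def by blast
  ultimately have "F = V"
    using W_max unfolding F_def by auto
  then show thesis
    using that W unfolding F_def by blast
qed

lemma funpow_star_eq_0_on_left_ideal:
  "left_ideal V \<Longrightarrow> card V = p ^ k \<Longrightarrow> k \<le> m \<Longrightarrow> x \<in> V \<Longrightarrow> (star circ c ^^ m) x = 0"
proof (induction k arbitrary: V m x rule: less_induct)
  case (less k)
  show ?case
  proof (cases "V = {0}")
    case True
    then show ?thesis
      using less.prems funpow_star_zero by auto
  next
    case False
    then obtain W where W: "left_ideal W" "W \<subset> V" "\<forall>a. \<forall>v\<in>V. star circ a v \<in> W"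
      using left_ideal_descent less.prems(1) by blast
    obtain j where "card W = p ^ j"
      using card_add_subgroup_dvd_prime_power[of W] W(1) prime_p
      by (auto simp: left_ideal_def divides_primepow_nat)
    moreover have "card W < card V"
      using W(2) by (simp add: psubset_card_mono)
    ultimately have "j < k"
      using less.prems(2) prime_p by (metis power_less_imp_less_exp prime_gt_1_nat)
    then obtain m' where "m = Suc m'" "j \<le> m'"
      using less.prems(3) by (cases m) auto
    then have "(star circ c ^^ m) x = (star circ c ^^ m') (star circ c x)"
      by (simp only: funpow_Suc_right o_apply)
    also have "\<dots> = 0"
      using less.IH[OF \<open>j < k\<close> W(1) \<open>card W = p ^ j\<close> \<open>j \<le> m'\<close>] W(3) less.prems(4) by blast
    finally show ?thesis .
  qed
qed

lemma funpow_star_eq_0: "n \<le> m \<Longrightarrow> (star circ c ^^ m) x = 0"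
  using funpow_star_eq_0_on_left_ideal[OF left_ideal_UNIV card_UNIV] by blast

lemma nsmul_choose_funpow_star:
  assumes "0 < k" "k < p \<or> n \<le> m"
  shows "nsmul (p ^ i choose k) ((star circ c ^^ m) x)
       = nsmul (p ^ i) (nsmul ((p ^ i choose k) div p ^ i) ((star circ c ^^ m) x))"
proof (cases "k < p")
  case True
  then have "p ^ i dvd (p ^ i choose k)"
    using prime_power_dvd_choose[OF prime_p \<open>0 < k\<close>] by blast
  then show ?thesis
    by (simp add: nsmul_nsmul)
next
  case False
  then show ?thesis
    using assms(2) funpow_star_eq_0 by simp
qed

context
  assumes n_less_p: "n < p"
begin

lemma lam_circ_pow_diff_in_mult_set: "lam (c [^]\<^bsub>circ_group\<^esub> (p ^ i)) x - x \<in> mult_set (p ^ i)"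
proof -
  obtain q where q: "p ^ i = Suc q"
    using prime_gt_0_nat[OF prime_p] by (metis gr0_conv_Suc zero_less_power)
  have "lam (c [^]\<^bsub>circ_group\<^esub> (p ^ i)) x = (\<Sum>m\<le>p ^ i. nsmul (p ^ i choose m) ((star circ c ^^ m) x))"
    unfolding lam_circ_pow lam_eq_id_plus_star[of c] by (rule iterate_id_plus_binomial[OF additive_star])
  then have "lam (c [^]\<^bsub>circ_group\<^esub> (p ^ i)) x - x
      = (\<Sum>m\<le>q. nsmul (p ^ i choose Suc m) ((star circ c ^^ Suc m) x))"
    unfolding q sum.atMost_Suc_shift by simp
  also have "\<dots> \<in> mult_set (p ^ i)"
  proof (rule add_subgroup_sum[OF add_subgroup_mult_set])
    fix m
    have "Suc m < p \<or> n \<le> Suc m"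
      using n_less_p by auto
    then show "nsmul (p ^ i choose Suc m) ((star circ c ^^ Suc m) x) \<in> mult_set (p ^ i)"
      by (subst nsmul_choose_funpow_star) simp_all
  qed
  finally show ?thesis .
qed

lemma circ_pow_prime_pow_decomposition:
  assumes W: "left_ideal W" and "star circ c c \<in> W"
  obtains y where "y \<in> W" "c [^]\<^bsub>circ_group\<^esub> (p ^ i) = nsmul (p ^ i) c + nsmul (p ^ i) y"
proof -
  obtain q where q: "p ^ i = Suc q"
    using prime_gt_0_nat[OF prime_p] by (metis gr0_conv_Suc zero_less_power)
  define y where "y = (\<Sum>m<q. nsmul ((p ^ i choose Suc (Suc m)) div p ^ i) ((star circ c ^^ Suc m) c))"
  have "c [^]\<^bsub>circ_group\<^esub> (p ^ i)
      = nsmul (p ^ i) c + (\<Sum>m<q. nsmul (p ^ i choose Suc (Suc m)) ((star circ c ^^ Suc m) c))"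
    unfolding circ_pow_binomial q sum.lessThan_Suc_shift by simp
  also have "(\<Sum>m<q. nsmul (p ^ i choose Suc (Suc m)) ((star circ c ^^ Suc m) c)) = nsmul (p ^ i) y"
    unfolding y_def additive.sum[OF additive_nsmul]
  proof (rule sum.cong[OF refl])
    fix m
    have "Suc (Suc m) < p \<or> n \<le> Suc m"
      using n_less_p by auto
    then show "nsmul (p ^ i choose Suc (Suc m)) ((star circ c ^^ Suc m) c)
        = nsmul (p ^ i) (nsmul ((p ^ i choose Suc (Suc m)) div p ^ i) ((star circ c ^^ Suc m) c))"
      by (rule nsmul_choose_funpow_star[OF zero_less_Suc])
  qed
  moreover have "(star circ c ^^ Suc m) c \<in> W" for m
    using left_ideal_funpow_star[OF W assms(2)] by (simp only: funpow_Suc_right o_apply)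
  then have "y \<in> W"
    using W unfolding y_def left_ideal_def by (blast intro: add_subgroup_sum add_subgroup_nsmul)
  ultimately show thesis
    using that by simp
qed

lemma star_nsmul_prime_pow_in_mult_set:
  "left_ideal V \<Longrightarrow> c \<in> V \<Longrightarrow> star circ (nsmul (p ^ i) c) x \<in> mult_set (p ^ i)"
proof (induction "card V" arbitrary: V c x rule: less_induct)
  case less
  show ?case
  proof (cases "V = {0}")
    case True
    then show ?thesis
      using less.prems add_subgroup_zero[OF add_subgroup_mult_set] by simp
  next
    case False
    then obtain W where W: "left_ideal W" "W \<subset> V" "\<forall>a. \<forall>v\<in>V. star circ a v \<in> W"
      using left_ideal_descent less.prems(1) by blast
    define g where "g = c [^]\<^bsub>circ_group\<^esub> (p ^ i)"
    obtain y where "y \<in> W" and g: "g = nsmul (p ^ i) c + nsmul (p ^ i) y"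
      using circ_pow_prime_pow_decomposition[OF W(1)] W(3) less.prems(2) unfolding g_def by blast
    define y' where "y' = lam (circ_inv g) (- y)"
    have "y' \<in> W"
      using W(1) \<open>y \<in> W\<close> unfolding y'_def left_ideal_def by (blast intro: add_subgroup_uminus)
    have "nsmul (p ^ i) c = circ g (nsmul (p ^ i) y')"
      unfolding circ_eq_add_lam y'_def additive.map_nsmul[OF additive_lam] lam_circ_inv g
      by (simp add: additive.minus[OF additive_nsmul])
    define z where "z = lam (nsmul (p ^ i) y') x"
    have "star circ (nsmul (p ^ i) c) x = (lam g z - z) + (z - x)"
      unfolding \<open>nsmul (p ^ i) c = circ g (nsmul (p ^ i) y')\<close> star_eq_lam lam_circ z_def by simp
    moreover have "lam g z - z \<in> mult_set (p ^ i)"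
      unfolding g_def by (rule lam_circ_pow_diff_in_mult_set)
    moreover have "z - x \<in> mult_set (p ^ i)"
      using less.hyps[OF psubset_card_mono[OF _ W(2)] W(1) \<open>y' \<in> W\<close>, of x]
      unfolding z_def star_eq_lam by simp
    ultimately show ?thesis
      by (metis add_subgroup_add[OF add_subgroup_mult_set])
  qed
qed

lemma star_in_mult_set: "a \<in> mult_set (p ^ i) \<Longrightarrow> star circ a x \<in> mult_set (p ^ i)"
  using star_nsmul_prime_pow_in_mult_set[OF left_ideal_UNIV] unfolding mult_set_def by blast

lemma star_in_mult_set_power_add:
  assumes "a \<in> mult_set (p ^ j)" "b \<in> mult_set (p ^ k)"
  shows "star circ a b \<in> mult_set (p ^ (j + k))"
proof -
  obtain z where z: "b = nsmul (p ^ k) z"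
    using assms(2) unfolding mult_set_def by blast
  obtain w where w: "star circ a z = nsmul (p ^ j) w"
    using star_in_mult_set[OF assms(1), of z] unfolding mult_set_def by blast
  have "star circ a b = nsmul (p ^ (j + k)) w"
    unfolding z additive.map_nsmul[OF additive_star] w by (simp add: nsmul_nsmul power_add mult.commute)
  then show ?thesis
    by simp
qed

lemma tree_eval_in_mult_set:
  "tree_eval circ t \<in> mult_set (p ^ length (filter (\<lambda>x. x \<in> mult_set p) (leaves t)))"
  by (induction t) (simp_all add: star_in_mult_set_power_add flip: One_nat_def)

lemma in_spow_imp_in_mult_set: "in_spow circ (mult_set p) i x \<Longrightarrow> x \<in> mult_set (p ^ i)"
  by (induction rule: in_spow.induct)
     (simp_all add: star_in_mult_set_power_add add_subgroup_mult_set add_subgroup_zero add_subgroup_add add_subgroup_uminus)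

lemma sub_brace_mult_set: "sub_brace circ (mult_set p)"
  unfolding sub_brace_def
proof (intro conjI ballI)
  have star_closed: "star circ a x \<in> mult_set p" if "a \<in> mult_set p" for a x
    using star_in_mult_set[of a 1] that by simp
  fix a :: 'a assume a: "a \<in> mult_set p"
  have "circ_inv a = - a - star circ a (circ_inv a)"
    by (simp add: star_def algebra_simps)
  then have "circ_inv a \<in> mult_set p"
    using a star_closed add_subgroup_mult_set by (metis add_subgroup_diff add_subgroup_uminus)
  then show "\<exists>b\<in>mult_set p. \<forall>x. circ (circ a b) x = x \<and> circ x (circ a b) = x"
    by (intro bexI[of _ "circ_inv a"]) simp_all
  fix b :: 'a assume b: "b \<in> mult_set p"
  have "circ a b = star circ a b + a + b"
    by (simp add: star_def)
  then show "circ a b \<in> mult_set p"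
    using a b star_closed add_subgroup_mult_set by (metis add_subgroup_add)
qed (simp_all add: add_subgroup_mult_set add_subgroup_zero add_subgroup_add add_subgroup_uminus)

lemma mult_set_prime_pow_pred_eq_0: "mult_set (p ^ (p - 1)) = ({0} :: 'a set)"
proof -
  have "p ^ (p - 1) = p ^ (p - 1 - n) * card (UNIV :: 'a set)"
    using n_less_p by (simp add: card_UNIV flip: power_add)
  then have "nsmul (p ^ (p - 1)) a = 0" for a :: 'a
    by (simp add: nsmul_nsmul[symmetric] nsmul_card_UNIV)
  then show ?thesis
    unfolding mult_set_def by auto
qed

end

end

theorem proposition4p1:
  fixes circ :: "'a::{ab_group_add,finite} \<Rightarrow> 'a \<Rightarrow> 'a" and p n :: nat
  assumes "left_brace circ" and "prime p" and "p > n + 1" and "card (UNIV :: 'a set) = p ^ n"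
  shows "sub_brace circ (mult_set p) \<and>
     (\<forall>t. (\<forall>x\<in>set (leaves t). x \<in> mult_set p) \<and> length (leaves t) = p - 1
              \<longrightarrow> tree_eval circ t = 0) \<and>
     strongly_nilpotent_index_le circ (mult_set p) (p - 1) \<and>
     (\<forall>t i. length (filter (\<lambda>x. x \<in> mult_set p) (leaves t)) \<ge> i
              \<longrightarrow> tree_eval circ t \<in> mult_set (p ^ i)) \<and>
     (\<forall>t. length (filter (\<lambda>x. x \<in> mult_set p) (leaves t)) \<ge> p - 1
              \<longrightarrow> tree_eval circ t = 0) \<and>
     mult_set (p ^ (p - 1)) = ({0} :: 'a set)"
proof -
  interpret p_brace circ p n
    by unfold_locales (use assms in auto)
  have "n < p"
    using assms by simp
  have products: "tree_eval circ t \<in> mult_set (p ^ i)"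
    if "length (filter (\<lambda>x. x \<in> mult_set p) (leaves t)) \<ge> i" for t i
    using tree_eval_in_mult_set[OF \<open>n < p\<close>] mult_set_antimono[OF le_imp_power_dvd[OF that]] by blast
  have vanishing: "mult_set (p ^ (p - 1)) = ({0} :: 'a set)"
    using mult_set_prime_pow_pred_eq_0[OF \<open>n < p\<close>] .
  have "spow circ (mult_set p) (p - 1) = {0}"
    using in_spow_imp_in_mult_set[OF \<open>n < p\<close>] vanishing in_spow.zero unfolding spow_def by blast
  then have "strongly_nilpotent_index_le circ (mult_set p) (p - 1)"
    unfolding strongly_nilpotent_index_le_def using assms(3) by (intro exI[of _ "p - 1"]) simp
  moreover have "length (filter (\<lambda>x. x \<in> mult_set p) (leaves t)) = length (leaves t)"
    if "\<forall>x\<in>set (leaves t). x \<in> mult_set p" for t :: "'a btree"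
    using that by (simp add: filter_id_conv)
  ultimately show ?thesis
    using sub_brace_mult_set[OF \<open>n < p\<close>] products vanishing by fastforce
qed

end
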